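(* Let $G=(V,E)$ be a finite graph, $f:V\to[0,r]$, and $C$ any vertex cover of (the underlying undirected graph of) $B_{0,f}$. Define $g_C(u)=f(u)$ for $u\in V\setminus C$ and $g_C(u)=\max\bigl(0,\max_{v\in V\setminus C}(f(v)-\mathrm{dist}_G(u,v))\bigr)$ for $u\in C$, where a maximum over an empty set is $0$. Then $g_C$ is Lipschitz.
   Context: $\mathrm{dist}_G$ is the shortest-path distance (taken to be $+\infty$ between different connected components, with $f(v)-\infty=-\infty$). $g$ is Lipschitz if $|g(x)-g(y)|\le\mathrm{dist}_G(x,y)$ for all $x,y$. $VS_f(x,y)=|f(x)-f(y)|-\mathrm{dist}_G(x,y)$ if positive, else $0$; $B_{0,f}$ is the directed graph on $V$ with edges $\{(x,y):VS_f(x,y)>0,\ f(x)<f(y)\}$. *)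

theory Defs
  imports Complex_Main "HOL-Library.Extended_Real"
begin

definition graph :: "'a set \<Rightarrow> 'a set set \<Rightarrow> bool" where
  "graph V E \<longleftrightarrow> finite V \<and> (\<forall>e\<in>E. e \<subseteq> V \<and> card e = 2)"

definition walk_len :: "'a set \<Rightarrow> 'a set set \<Rightarrow> nat \<Rightarrow> 'a \<Rightarrow> 'a \<Rightarrow> bool" where
  "walk_len V E n u v \<longleftrightarrow> u \<in> V \<and> v \<in> V \<and>
     (\<exists>p::nat \<Rightarrow> 'a. p 0 = u \<and> p n = v \<and> (\<forall>i<n. {p i, p (Suc i)} \<in> E))"

definition gdist :: "'a set \<Rightarrow> 'a set set \<Rightarrow> 'a \<Rightarrow> 'a \<Rightarrow> ereal" where
  "gdist V E u v = (if \<exists>n. walk_len V E n u v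
                    then ereal (real (LEAST n. walk_len V E n u v)) else \<infinity>)"

definition lipschitz_graph :: "'a set \<Rightarrow> 'a set set \<Rightarrow> ('a \<Rightarrow> ereal) \<Rightarrow> bool" where
  "lipschitz_graph V E g \<longleftrightarrow> (\<forall>x\<in>V. \<forall>y\<in>V. \<bar>g x - g y\<bar> \<le> gdist V E x y)"

definition VS :: "'a set \<Rightarrow> 'a set set \<Rightarrow> ('a \<Rightarrow> real) \<Rightarrow> 'a \<Rightarrow> 'a \<Rightarrow> ereal" where
  "VS V E f x y = (let d = ereal \<bar>f x - f y\<bar> - gdist V E x y in if d > 0 then d else 0)"

definition B0 :: "'a set \<Rightarrow> 'a set set \<Rightarrow> ('a \<Rightarrow> real) \<Rightarrow> ('a \<times> 'a) set" where
  "B0 V E f = {(x, y). x \<in> V \<and> y \<in> V \<and> VS V E f x y > 0 \<and> f x < f y}"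

definition vertex_cover :: "'a set \<Rightarrow> ('a \<times> 'a) set \<Rightarrow> 'a set \<Rightarrow> bool" where
  "vertex_cover V A C \<longleftrightarrow> C \<subseteq> V \<and> (\<forall>(x, y)\<in>A. x \<in> C \<or> y \<in> C)"

definition Max0 :: "ereal set \<Rightarrow> ereal" where
  "Max0 S = (if S = {} then 0 else Max S)"

definition gC :: "'a set \<Rightarrow> 'a set set \<Rightarrow> ('a \<Rightarrow> real) \<Rightarrow> 'a set \<Rightarrow> 'a \<Rightarrow> ereal" where
  "gC V E f C u = (if u \<in> C
      then max 0 (Max0 ((\<lambda>v. ereal (f v) - gdist V E u v) ` (V - C)))
      else ereal (f u))"

end

theory Submission
  imports Defs
begin

text \<open>
  No arc of \<open>B0 V E f\<close> joins two vertices outside the cover \<open>C\<close>, so \<open>f\<close> is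
  1-Lipschitz on \<open>V - C\<close>. On \<open>C\<close>, the function \<open>gC\<close> is McShane's extension
  \<open>u \<mapsto> max 0 (max\<^sub>v (f v - dist u v))\<close> of \<open>f\<close> from \<open>V - C\<close>: each
  \<open>u \<mapsto> f v - dist u v\<close> is 1-Lipschitz by the triangle inequality, hence so is the
  maximum, and on \<open>V - C\<close> the maximum is attained at \<open>v = u\<close> because \<open>f\<close> is
  Lipschitz and nonnegative there. So \<open>gC\<close> is the McShane extension on all of \<open>V\<close>.
\<close>

lemma walk_len_sym:
  assumes "walk_len V E n u v"
  shows "walk_len V E n v u"
proof -
  from assms obtain p where p: "u \<in> V" "v \<in> V" "p 0 = u" "p n = v" "\<forall>i<n. {p i, p (Suc i)} \<in> E"
    unfolding walk_len_def by blast
  define q where "q i = p (n - i)" for i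
  have "{q i, q (Suc i)} \<in> E" if i: "i < n" for i
  proof -
    have "{p (n - Suc i), p (Suc (n - Suc i))} \<in> E" using p(5) i by auto
    moreover have "Suc (n - Suc i) = n - i" using i by auto
    ultimately show ?thesis unfolding q_def by (simp add: insert_commute)
  qed
  moreover have "q 0 = v" "q n = u" using p unfolding q_def by auto
  ultimately show ?thesis using p unfolding walk_len_def by blast
qed

lemma walk_len_append:
  assumes "walk_len V E m u v" "walk_len V E n v w"
  shows "walk_len V E (m + n) u w"
proof -
  from assms(1) obtain p where p: "u \<in> V" "p 0 = u" "p m = v" "\<forall>i<m. {p i, p (Suc i)} \<in> E"
    unfolding walk_len_def by blast
  from assms(2) obtain q where q: "w \<in> V" "q 0 = v" "q n = w" "\<forall>i<n. {q i, q (Suc i)} \<in> E"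
    unfolding walk_len_def by blast
  define r where "r i = (if i \<le> m then p i else q (i - m))" for i
  have "{r i, r (Suc i)} \<in> E" if i: "i < m + n" for i
  proof (cases "i < m")
    case True
    then show ?thesis using p(4) unfolding r_def by auto
  next
    case False
    then have "r i = q (i - m)" "r (Suc i) = q (Suc (i - m))"
      using p(3) q(2) unfolding r_def by (auto simp: Suc_diff_le)
    then show ?thesis using q(4) i False by auto
  qed
  moreover have "r 0 = u" "r (m + n) = w" using p q unfolding r_def by auto
  ultimately show ?thesis using p q unfolding walk_len_def by blast
qed

lemma gdist_commute: "gdist V E u v = gdist V E v u"
proof -
  have "walk_len V E n u v = walk_len V E n v u" for n
    using walk_len_sym by metis
  then show ?thesis unfolding gdist_def by simp
qed

lemma gdist_self: "u \<in> V \<Longrightarrow> gdist V E u u = 0"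
proof -
  assume "u \<in> V"
  then have "walk_len V E 0 u u" unfolding walk_len_def by auto
  then show ?thesis unfolding gdist_def by auto
qed

lemma gdist_nonneg: "0 \<le> gdist V E u v"
  unfolding gdist_def by auto

lemma gdist_triangle: "gdist V E x z \<le> gdist V E x y + gdist V E y z"
proof (cases "(\<exists>n. walk_len V E n x y) \<and> (\<exists>n. walk_len V E n y z)")
  case True
  define a where "a = (LEAST n. walk_len V E n x y)"
  define b where "b = (LEAST n. walk_len V E n y z)"
  have "walk_len V E a x y" "walk_len V E b y z"
    unfolding a_def b_def using True by (meson LeastI)+
  then have w: "walk_len V E (a + b) x z" by (rule walk_len_append)
  then have "(LEAST n. walk_len V E n x z) \<le> a + b" by (rule Least_le)
  then show ?thesis using w True unfolding gdist_def a_def[symmetric] b_def[symmetric] by auto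
next
  case False
  then have "gdist V E x y = \<infinity> \<or> gdist V E y z = \<infinity>"
    unfolding gdist_def by auto
  then show ?thesis by auto
qed

lemma ereal_diff_le_diff_add:
  fixes a :: real and dxv dyv dxy :: ereal
  assumes "0 \<le> dxv" "dyv \<le> dxy + dxv"
  shows "ereal a - dxv \<le> (ereal a - dyv) + dxy"
  using assms by (cases dxv; cases dyv; cases dxy) auto

lemma ereal_abs_diff_le:
  fixes a b d :: ereal
  assumes "\<bar>a\<bar> \<noteq> \<infinity>" "\<bar>b\<bar> \<noteq> \<infinity>" "a \<le> b + d" "b \<le> a + d"
  shows "\<bar>a - b\<bar> \<le> d"
  using assms by (cases a; cases b; cases d) auto

lemma lipschitz_off_vertex_cover:
  assumes "vertex_cover V (B0 V E f) C" "u \<in> V - C" "v \<in> V - C"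
  shows "ereal \<bar>f u - f v\<bar> \<le> gdist V E u v"
proof (rule ccontr)
  assume "\<not> ereal \<bar>f u - f v\<bar> \<le> gdist V E u v"
  then have "ereal \<bar>f u - f v\<bar> - gdist V E u v > 0" "f u \<noteq> f v"
    using gdist_nonneg[of V E u v] by (cases "gdist V E u v"; auto)+
  then have "VS V E f u v > 0" "VS V E f v u > 0"
    unfolding VS_def by (auto simp: gdist_commute abs_minus_commute)
  then have "(u, v) \<in> B0 V E f \<or> (v, u) \<in> B0 V E f"
    using \<open>f u \<noteq> f v\<close> assms(2,3) unfolding B0_def by (auto simp: neq_iff)
  then show False using assms unfolding vertex_cover_def by auto
qed

definition mcshane_ext :: "'a set \<Rightarrow> 'a set set \<Rightarrow> ('a \<Rightarrow> real) \<Rightarrow> 'a set \<Rightarrow> 'a \<Rightarrow> ereal" where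
  "mcshane_ext V E f S u = max 0 (Max0 ((\<lambda>v. ereal (f v) - gdist V E u v) ` S))"

lemma mcshane_ext_nonneg: "0 \<le> mcshane_ext V E f S u"
  unfolding mcshane_ext_def by simp

lemma mcshane_ext_ge:
  assumes "finite S" "v \<in> S"
  shows "ereal (f v) - gdist V E u v \<le> mcshane_ext V E f S u"
  using assms unfolding mcshane_ext_def Max0_def by (auto intro: le_max_iff_disj[THEN iffD2])

lemma mcshane_ext_le:
  assumes "finite S" "0 \<le> b" "\<And>v. v \<in> S \<Longrightarrow> ereal (f v) - gdist V E u v \<le> b"
  shows "mcshane_ext V E f S u \<le> b"
  using assms unfolding mcshane_ext_def Max0_def by auto

lemma mcshane_ext_finite:
  assumes "finite S"
  shows "\<bar>mcshane_ext V E f S u\<bar> \<noteq> \<infinity>"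
proof -
  have "mcshane_ext V E f S u \<le> ereal (Max (insert 0 (f ` S)))"
  proof (rule mcshane_ext_le[OF assms])
    fix v assume "v \<in> S"
    then have "f v \<le> Max (insert 0 (f ` S))" using assms by simp
    then show "ereal (f v) - gdist V E u v \<le> ereal (Max (insert 0 (f ` S)))"
      using gdist_nonneg[of V E u v] by (cases "gdist V E u v") auto
  qed (use assms in simp)
  then show ?thesis using mcshane_ext_nonneg[of V E f S u] by auto
qed

lemma mcshane_ext_le_add_gdist:
  assumes "finite S"
  shows "mcshane_ext V E f S x \<le> mcshane_ext V E f S y + gdist V E x y"
proof (rule mcshane_ext_le[OF assms])
  show "0 \<le> mcshane_ext V E f S y + gdist V E x y"
    by (intro add_nonneg_nonneg mcshane_ext_nonneg gdist_nonneg)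
  fix v assume "v \<in> S"
  have "gdist V E y v \<le> gdist V E x y + gdist V E x v"
    using gdist_triangle[of V E y v x] unfolding gdist_commute[of V E y x] .
  then have "ereal (f v) - gdist V E x v \<le> (ereal (f v) - gdist V E y v) + gdist V E x y"
    by (rule ereal_diff_le_diff_add[OF gdist_nonneg])
  also have "\<dots> \<le> mcshane_ext V E f S y + gdist V E x y"
    by (rule add_right_mono[OF mcshane_ext_ge[OF assms \<open>v \<in> S\<close>]])
  finally show "ereal (f v) - gdist V E x v \<le> mcshane_ext V E f S y + gdist V E x y" .
qed

lemma lipschitz_mcshane_ext:
  assumes "finite S"
  shows "lipschitz_graph V E (mcshane_ext V E f S)"
  unfolding lipschitz_graph_def
proof (intro ballI)
  fix x y
  let ?h = "mcshane_ext V E f S"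
  have "?h x \<le> ?h y + gdist V E x y" "?h y \<le> ?h x + gdist V E x y"
    using mcshane_ext_le_add_gdist[OF assms] by (metis gdist_commute)+
  then show "\<bar>?h x - ?h y\<bar> \<le> gdist V E x y"
    using mcshane_ext_finite[OF assms] by (intro ereal_abs_diff_le)
qed

lemma mcshane_ext_eq:
  assumes "finite S" "S \<subseteq> V" "u \<in> S" "0 \<le> f u"
    and lip: "\<And>v. v \<in> S \<Longrightarrow> ereal \<bar>f u - f v\<bar> \<le> gdist V E u v"
  shows "mcshane_ext V E f S u = ereal (f u)"
proof (rule antisym)
  show "mcshane_ext V E f S u \<le> ereal (f u)"
  proof (rule mcshane_ext_le[OF assms(1)])
    fix v assume "v \<in> S"
    then show "ereal (f v) - gdist V E u v \<le> ereal (f u)"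
      using lip[of v] gdist_nonneg[of V E u v] by (cases "gdist V E u v") auto
  qed (use assms in simp)
  show "ereal (f u) \<le> mcshane_ext V E f S u"
    using mcshane_ext_ge[OF assms(1,3), of f V E u] gdist_self[of u V E] assms(2,3) by auto
qed

lemma lipschitz_graph_cong:
  "(\<And>u. u \<in> V \<Longrightarrow> g u = h u) \<Longrightarrow> lipschitz_graph V E h \<Longrightarrow> lipschitz_graph V E g"
  unfolding lipschitz_graph_def by simp

theorem claim3p2:
  fixes V :: "'a set" and E :: "'a set set" and f :: "'a \<Rightarrow> real" and r :: real and C :: "'a set"
  assumes "graph V E"
    and "\<forall>v\<in>V. 0 \<le> f v \<and> f v \<le> r"
    and "vertex_cover V (B0 V E f) C"
  shows "lipschitz_graph V E (gC V E f C)"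
proof (rule lipschitz_graph_cong)
  have fin: "finite (V - C)" using assms(1) unfolding graph_def by simp
  then show "lipschitz_graph V E (mcshane_ext V E f (V - C))"
    by (rule lipschitz_mcshane_ext)
  fix u assume "u \<in> V"
  show "gC V E f C u = mcshane_ext V E f (V - C) u"
  proof (cases "u \<in> C")
    case False
    then have "mcshane_ext V E f (V - C) u = ereal (f u)"
      using mcshane_ext_eq[OF fin] lipschitz_off_vertex_cover[OF assms(3)] assms(2) \<open>u \<in> V\<close>
      by blast
    then show ?thesis using False unfolding gC_def by simp
  qed (simp add: gC_def mcshane_ext_def)
qed

end
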